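(* Let $2\le n<m$ and $Q=\sum_{i\in[m]}q_i\mathrm B(\sigma_i)\in\mathbb B_m^*$ with all $q_i>0$ and $0\le\sigma_1<\cdots<\sigma_m\le1/2$. Let $W=D_Q(i_2,\dots,i_n;s_2,\dots,s_n)$ and $W'=D_Q(i'_2,\dots,i'_n;s'_2,\dots,s'_n)$ be $2n$-P$^*$-degradations of $Q$ such that the number of indices $j\in\{2,\dots,n\}$ with $(i_j,s_j)\neq(i'_j,s'_j)$ is at most two. If $W\preccurlyeq W'$, then $W\cong W'$. (That is, no $2n$-P$^*$-degradation strictly upgrading $W$ can be obtained by changing at most two splitting patterns of $W$.)
   Context: A BIDMC $W$ has input uniform on $\{0,1\}$, discrete output alphabet $\mathcal Y$ and transition probabilities $\Pr(y\mid x)$; its LR-profile is $P_W(\varepsilon)=\Pr\big(\mathcal L_W(y)=\varepsilon/(1-\varepsilon)\big)$ with $\mathcal L_W(\hat y)=\Pr(y=\hat y\mid x=0)/\Pr(y=\hat y\mid x=1)$, and $W\cong W'$ if LR-profiles coincide; channel identities are up to $\cong$. $W'\preccurlyeq W$ if there is a channel $T$ from the output alphabet of $W$ to that of $W'$ with $\Pr(y'\mid x'=a)=\sum_{y}\Pr(y\mid x=a)T(y'\mid y)$. $\mathrm B(\varepsilon)$ is the BSC with crossover probability $\varepsilon$; $\sum_iq_iW_i$ denotes the random switching channel (use $W_i$ with probability $q_i$ independently of the input and output the index $i$ along with the output). $\mathbb B_n$ is the set of BIDMCs equivalent to $\sum_{i\in[n]}p_i\mathrm B(\varepsilon_i)$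 for a probability vector $(p_i)$ and $\varepsilon_i\in[0,1]$; $\mathbb B_n^*=\mathbb B_n\setminus\mathbb B_{n-1}$. $P_\epsilon(W)=\frac12\sum_{y}\min\{\Pr(y\mid x=0),\Pr(y\mid x=1)\}$. For a symmetric BIDMC $Q$ and $n\ge1$, $W$ is a $2n$-P-degradation of $Q$ if $W\in\mathbb B_n$, $W\preccurlyeq Q$ and $P_\epsilon(W)=\min\{P_\epsilon(W'):W'\in\mathbb B_n,\ W'\preccurlyeq Q\}$. Construction of $D_Q$: for $Q$ as in the claim, put $q_0=q_{m+1}=0$. Given integers $1\le i_2<\cdots<i_n\le m$ and reals $s_j\in[0,q_{i_j}]$, set $i_1=0$, $s_1=0$, $i_{n+1}=m+1$, $s_{n+1}=0$, and for $j\in[n]$ $$p_j=s_j+(q_{i_{j+1}}-s_{j+1})+\sum_{i_j<i<i_{j+1}}q_i,\qquad p_j\varepsilon_j=s_j\sigma_{i_j}+(q_{i_{j+1}}-s_{j+1})\sigma_{i_{j+1}}+\sum_{i_j<i<i_{j+1}}q_i\sigma_i$$ (terms with weight $0$ contribute $0$). Then $D_Q(i_2,\dots,i_n;s_2,\dots,s_n)=\sum_{j\in[n]:p_j>0}p_j\mathrm B(\varepsilon_j)$; the pairs $(i_j,s_j)$ are its splitting patterns. Such a channel is a $2n$-P$^*$-degradation of $Q$ if (i) all $p_j>0$ and $0\le\varepsilon_1<\cdots<\varepsilon_n\le1/2$; (ii) it is a $2n$-P-degradation of $Q$; (iii) for every $j\in[n]$ with $i_{j+1}=i_j+1$: if $s_j=0$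 then $s_{j+1}=0$, and if $s_{j+1}=q_{i_{j+1}}$ then $s_j=q_{i_j}$. *)

theory Defs
  imports Complex_Main
begin

text \<open>A BIDMC with finite output alphabet is represented as a pair (Y, W):
  Y is a finite set of output symbols (encoded as naturals) and
  W x y = Pr(y | x) for inputs x in {0,1}.\<close>

type_synonym chan = "nat set \<times> (nat \<Rightarrow> nat \<Rightarrow> real)"

definition is_bidmc :: "chan \<Rightarrow> bool" where
  "is_bidmc C \<longleftrightarrow> finite (fst C) \<and>
     (\<forall>x\<in>{0,1}. \<forall>y\<in>fst C. snd C x y \<ge> 0) \<and>
     (\<forall>x\<in>{0,1}. (\<Sum>y\<in>fst C. snd C x y) = 1)"

text \<open>LR-profile: P_W(eps) = Pr(L_W(y) = eps/(1-eps)) under uniform input,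
  where L_W(y) = W 0 y / W 1 y in [0, infinity]. The event
  L_W(y) = eps/(1-eps) is written cross-multiplied (handles eps = 1 / infinity).\<close>

definition lr_profile :: "chan \<Rightarrow> real \<Rightarrow> real" where
  "lr_profile C \<epsilon> =
     (\<Sum>y\<in>{y\<in>fst C. snd C 0 y * (1 - \<epsilon>) = snd C 1 y * \<epsilon>}.
        (snd C 0 y + snd C 1 y) / 2)"

definition chan_equiv :: "chan \<Rightarrow> chan \<Rightarrow> bool" where
  "chan_equiv C C' \<longleftrightarrow> (\<forall>\<epsilon>\<in>{0..1}. lr_profile C \<epsilon> = lr_profile C' \<epsilon>)"

text \<open>degraded C' C  means  C' \<preccurlyeq> C : C' is obtained from C by post-processing
  with a channel T, where T y y' = T(y' | y).\<close>

definition degraded :: "chan \<Rightarrow> chan \<Rightarrow> bool" where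
  "degraded C' C \<longleftrightarrow> (\<exists>T :: nat \<Rightarrow> nat \<Rightarrow> real.
     (\<forall>y\<in>fst C. \<forall>y'\<in>fst C'. T y y' \<ge> 0) \<and>
     (\<forall>y\<in>fst C. (\<Sum>y'\<in>fst C'. T y y') = 1) \<and>
     (\<forall>a\<in>{0,1}. \<forall>y'\<in>fst C'. snd C' a y' = (\<Sum>y\<in>fst C. snd C a y * T y y')))"

text \<open>Random switching channel  sum_{j in J} p_j B(e_j): output (j, b) encoded as 2*j + b.\<close>

definition bsc_mix :: "nat set \<Rightarrow> (nat \<Rightarrow> real) \<Rightarrow> (nat \<Rightarrow> real) \<Rightarrow> chan" where
  "bsc_mix J p e = ({y. y div 2 \<in> J},
     \<lambda>x y. p (y div 2) * (if y mod 2 = x then 1 - e (y div 2) else e (y div 2)))"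

definition in_B :: "nat \<Rightarrow> chan \<Rightarrow> bool" where
  "in_B n C \<longleftrightarrow> is_bidmc C \<and>
     (\<exists>p e. (\<forall>i\<in>{1..n}. p i \<ge> 0 \<and> 0 \<le> e i \<and> e i \<le> 1) \<and> (\<Sum>i=1..n. p i) = 1 \<and>
            chan_equiv C (bsc_mix {1..n} p e))"

definition in_Bstar :: "nat \<Rightarrow> chan \<Rightarrow> bool" where
  "in_Bstar n C \<longleftrightarrow> in_B n C \<and> \<not> in_B (n - 1) C"

definition Perr :: "chan \<Rightarrow> real" where
  "Perr C = (1/2) * (\<Sum>y\<in>fst C. min (snd C 0 y) (snd C 1 y))"

definition is_P_degr :: "nat \<Rightarrow> chan \<Rightarrow> chan \<Rightarrow> bool" where
  "is_P_degr n W Q \<longleftrightarrow> in_B n W \<and> degraded W Q \<and>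
     (\<forall>W'. in_B n W' \<and> degraded W' Q \<longrightarrow> Perr W \<le> Perr W')"

text \<open>Construction D_Q. Parameters: m, q, sigma (Q = sum_{k in [m]} q_k B(sigma_k)),
  n, and i, s (only i j, s j for j in {2..n} are used).\<close>

definition qx :: "nat \<Rightarrow> (nat \<Rightarrow> real) \<Rightarrow> nat \<Rightarrow> real" where
  "qx m q k = (if 1 \<le> k \<and> k \<le> m then q k else 0)"

definition ix :: "nat \<Rightarrow> nat \<Rightarrow> (nat \<Rightarrow> nat) \<Rightarrow> nat \<Rightarrow> nat" where
  "ix m n i j = (if j = 1 then 0 else if j = n + 1 then m + 1 else i j)"

definition sx :: "nat \<Rightarrow> (nat \<Rightarrow> real) \<Rightarrow> nat \<Rightarrow> real" where
  "sx n s j = (if j = 1 \<or> j = n + 1 then 0 else s j)"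

definition DQ_p :: "nat \<Rightarrow> (nat \<Rightarrow> real) \<Rightarrow> nat \<Rightarrow> (nat \<Rightarrow> nat) \<Rightarrow> (nat \<Rightarrow> real) \<Rightarrow> nat \<Rightarrow> real" where
  "DQ_p m q n i s j =
     sx n s j + (qx m q (ix m n i (j+1)) - sx n s (j+1))
     + (\<Sum>k\<in>{ix m n i j<..<ix m n i (j+1)}. qx m q k)"

definition DQ_pe :: "nat \<Rightarrow> (nat \<Rightarrow> real) \<Rightarrow> (nat \<Rightarrow> real) \<Rightarrow> nat \<Rightarrow> (nat \<Rightarrow> nat) \<Rightarrow> (nat \<Rightarrow> real) \<Rightarrow> nat \<Rightarrow> real" where
  "DQ_pe m q \<sigma> n i s j =
     sx n s j * \<sigma> (ix m n i j)
     + (qx m q (ix m n i (j+1)) - sx n s (j+1)) * \<sigma> (ix m n i (j+1))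
     + (\<Sum>k\<in>{ix m n i j<..<ix m n i (j+1)}. qx m q k * \<sigma> k)"

definition DQ_eps :: "nat \<Rightarrow> (nat \<Rightarrow> real) \<Rightarrow> (nat \<Rightarrow> real) \<Rightarrow> nat \<Rightarrow> (nat \<Rightarrow> nat) \<Rightarrow> (nat \<Rightarrow> real) \<Rightarrow> nat \<Rightarrow> real" where
  "DQ_eps m q \<sigma> n i s j = DQ_pe m q \<sigma> n i s j / DQ_p m q n i s j"

definition DQ :: "nat \<Rightarrow> (nat \<Rightarrow> real) \<Rightarrow> (nat \<Rightarrow> real) \<Rightarrow> nat \<Rightarrow> (nat \<Rightarrow> nat) \<Rightarrow> (nat \<Rightarrow> real) \<Rightarrow> chan" where
  "DQ m q \<sigma> n i s =
     bsc_mix {j\<in>{1..n}. DQ_p m q n i s j > 0} (DQ_p m q n i s) (DQ_eps m q \<sigma> n i s)"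

definition DQ_valid :: "nat \<Rightarrow> (nat \<Rightarrow> real) \<Rightarrow> nat \<Rightarrow> (nat \<Rightarrow> nat) \<Rightarrow> (nat \<Rightarrow> real) \<Rightarrow> bool" where
  "DQ_valid m q n i s \<longleftrightarrow>
     (\<forall>j\<in>{2..n}. 1 \<le> i j \<and> i j \<le> m \<and> 0 \<le> s j \<and> s j \<le> q (i j)) \<and>
     (\<forall>j\<in>{2..<n}. i j < i (j+1))"

definition is_Pstar_degr :: "nat \<Rightarrow> (nat \<Rightarrow> real) \<Rightarrow> (nat \<Rightarrow> real) \<Rightarrow> nat \<Rightarrow> (nat \<Rightarrow> nat) \<Rightarrow> (nat \<Rightarrow> real) \<Rightarrow> bool" where
  "is_Pstar_degr m q \<sigma> n i s \<longleftrightarrow>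
     DQ_valid m q n i s \<and>
     (\<forall>j\<in>{1..n}. DQ_p m q n i s j > 0) \<and>
     0 \<le> DQ_eps m q \<sigma> n i s 1 \<and>
     (\<forall>j\<in>{1..<n}. DQ_eps m q \<sigma> n i s j < DQ_eps m q \<sigma> n i s (j+1)) \<and>
     DQ_eps m q \<sigma> n i s n \<le> 1/2 \<and>
     is_P_degr n (DQ m q \<sigma> n i s) (bsc_mix {1..m} q \<sigma>) \<and>
     (\<forall>j\<in>{1..n}. ix m n i (j+1) = ix m n i j + 1 \<longrightarrow>
        (sx n s j = 0 \<longrightarrow> sx n s (j+1) = 0) \<and>
        (sx n s (j+1) = qx m q (ix m n i (j+1)) \<longrightarrow> sx n s j = qx m q (ix m n i j)))"

end

theory Submission
  imports Defs
begin

(* Lay the atoms q_b B(sigma_b) of Q side by side on a mass axis [0, M], M = q_1 + ... + q_m, and let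
  G(y) be the integral of the crossover probability over [0, y]; G is convex because sigma is
  increasing. A channel D_Q(i, s) cuts the axis at knots 0 = K_0 < K_1 < ... < K_n = M, and its
  j-th BSC has weight K_j - K_(j-1) and error mass G(K_j) - G(K_(j-1)).

  If W <= W', push the test function "output lies in one of the first k components of W" through
  the degrading channel. This yields weights g_j in [0, 1] on the components of W' with
  sum g_j (K'_j - K'_(j-1)) = K_k and sum g_j (G(K'_j) - G(K'_(j-1))) <= G(K_k). Comparing with the
  supporting line of G at K_k, whose slope is the sigma of the atom containing K_k, forces g to be
  the indicator of an initial segment, so K_k is a knot of W' unless some interval of W' is exactly
  that atom with K_k strictly inside it. The splitting condition (iii) excludes intervals lying
  strictly inside an atom, and a counting argument on the two increasing knot sequences then gives
  K = K', so W and W' have the same components. *)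

lemma sum_atMost_diff:
  fixes f :: "nat \<Rightarrow> 'a::ab_group_add"
  assumes "\<alpha> < \<beta>"
  shows "(\<Sum>b\<le>\<beta>. f b) - (\<Sum>b\<le>\<alpha>. f b) = (\<Sum>b\<in>{\<alpha><..<\<beta>}. f b) + f \<beta>"
proof -
  have "{..\<beta>} = insert \<beta> ({..\<alpha>} \<union> {\<alpha><..<\<beta>})" using assms by auto
  then have "(\<Sum>b\<le>\<beta>. f b) = f \<beta> + (\<Sum>b\<in>{..\<alpha>} \<union> {\<alpha><..<\<beta>}. f b)"
    using assms by simp
  also have "(\<Sum>b\<in>{..\<alpha>} \<union> {\<alpha><..<\<beta>}. f b) = (\<Sum>b\<le>\<alpha>. f b) + (\<Sum>b\<in>{\<alpha><..<\<beta>}. f b)"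
    by (rule sum.union_disjoint) auto
  finally show ?thesis by (simp add: algebra_simps)
qed

lemma sum_truncated_parts:
  fixes r :: "nat \<Rightarrow> real"
  assumes "\<And>b. 0 \<le> r b" "r 0 = 0" "0 \<le> y"
  shows "(\<Sum>b\<in>{1..M}. max 0 (min (r b) (y - (\<Sum>c\<le>b - 1. r c)))) = min y (\<Sum>c\<le>M. r c)"
proof (induction M)
  case 0
  then show ?case using assms by simp
next
  case (Suc M)
  have "{1..Suc M} = insert (Suc M) {1..M}" by auto
  then have "(\<Sum>b\<in>{1..Suc M}. max 0 (min (r b) (y - (\<Sum>c\<le>b - 1. r c))))
      = max 0 (min (r (Suc M)) (y - (\<Sum>c\<le>M. r c))) + min y (\<Sum>c\<le>M. r c)"
    using Suc by simp
  also have "\<dots> = min y (\<Sum>c\<le>Suc M. r c)"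
    using assms(1)[of "Suc M"] by (simp add: min_def max_def)
  finally show ?case .
qed

lemma sum_split_at:
  fixes f :: "nat \<Rightarrow> 'a::comm_monoid_add"
  assumes "a \<in> {1..m}"
  shows "(\<Sum>b\<in>{1..m}. f b) = (\<Sum>b\<in>{1..<a}. f b) + f a + (\<Sum>b\<in>{a<..m}. f b)"
proof -
  have "{1..m} = insert a ({1..<a} \<union> {a<..m})" using assms by auto
  then show ?thesis by (simp, subst sum.union_disjoint) (auto simp: add_ac)
qed

lemma sum_if_le_prefix:
  fixes f :: "nat \<Rightarrow> 'a::comm_monoid_add"
  assumes "k \<le> n"
  shows "(\<Sum>j\<in>{1..n}. if j \<le> k then f j else 0) = (\<Sum>j\<in>{1..k}. f j)"
proof -
  have "{j \<in> {1..n}. j \<le> k} = {1..k}" using assms by auto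
  then show ?thesis by (simp add: sum.inter_filter[symmetric])
qed

lemma sum_weighted_pos:
  fixes c f :: "nat \<Rightarrow> real"
  assumes "finite S" "\<And>x. x \<in> S \<Longrightarrow> 0 \<le> f x" "\<And>x. x \<in> S \<Longrightarrow> 0 < c x" "0 < (\<Sum>x\<in>S. f x)"
  shows "0 < (\<Sum>x\<in>S. c x * f x)"
proof -
  obtain x where "x \<in> S" "0 < f x"
    using assms(4) sum_nonpos[of S f] by (meson not_le)
  then show ?thesis
    using assms(1-3) by (intro sum_pos2[of S x]) (auto intro: mult_nonneg_nonneg less_imp_le)
qed

lemma ex_bracketing_interval:
  fixes f :: "nat \<Rightarrow> real"
  assumes "1 \<le> N" "f 0 \<le> u" "u \<le> f N"
  shows "\<exists>j\<in>{1..N}. f (j - 1) \<le> u \<and> u \<le> f j"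
  using assms
proof (induction N)
  case 0
  then show ?case by simp
next
  case (Suc N)
  show ?case
  proof (cases "1 \<le> N \<and> u \<le> f N")
    case True
    then show ?thesis using Suc by force
  next
    case False
    then have "f N \<le> u" using Suc.prems(2) by (cases N) auto
    then show ?thesis using Suc.prems(3) by force
  qed
qed

text \<open>Upwards induction gives \<open>u' \<le> u\<close> pointwise; this rules out the second alternative of
  \<open>hit\<close>, and downwards induction then gives equality.\<close>

lemma knot_sequences_eq:
  fixes u u' :: "nat \<Rightarrow> real"
  assumes mono: "strict_mono_on {..n} u" "strict_mono_on {..n} u'"
    and ends: "u 0 = u' 0" "u n = u' n"
    and hit: "\<And>k. 0 < k \<Longrightarrow> k < n \<Longrightarrow> (\<exists>j\<le>n. u k = u' j) \<or>
        (\<exists>j\<in>{1..n}. u (k - 1) < u' (j - 1) \<and> u' (j - 1) < u k \<and> u k < u' j \<and> u' j < u (k + 1))"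
    and k: "k \<le> n"
  shows "u k = u' k"
proof -
  have less_iff: "u a < u b \<longleftrightarrow> a < b" "u' a < u' b \<longleftrightarrow> a < b" if "a \<le> n" "b \<le> n" for a b
    using strict_mono_on_less[OF mono(1)] strict_mono_on_less[OF mono(2)] that by auto
  have below: "u' k \<le> u k" if "k \<le> n" for k
    using that
  proof (induction k)
    case 0
    then show ?case using ends by simp
  next
    case (Suc k)
    show ?case
    proof (cases "Suc k = n")
      case True
      then show ?thesis using ends by simp
    next
      case False
      then have "Suc k < n" using Suc.prems by simp
      have "u k < u (Suc k)" using less_iff(1)[of k "Suc k"] Suc.prems by simp
      have "\<exists>j\<le>n. u k < u' j \<and> u' j \<le> u (Suc k)"
        using hit[OF zero_less_Suc \<open>Suc k < n\<close>]
      proof (elim disjE exE bexE conjE)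
        fix j assume "j \<le> n" "u (Suc k) = u' j"
        then show ?thesis using \<open>u k < u (Suc k)\<close> by (intro exI[of _ j]) simp
      next
        fix j assume "j \<in> {1..n}" "u (Suc k - 1) < u' (j - 1)" "u' (j - 1) < u (Suc k)"
        then show ?thesis by (intro exI[of _ "j - 1"]) auto
      qed
      then obtain j where j: "j \<le> n" "u k < u' j" "u' j \<le> u (Suc k)" by blast
      have "u' k < u' j" using Suc j by simp
      then have "Suc k \<le> j" using less_iff(2)[of k j] j Suc.prems by simp
      then have "u' (Suc k) \<le> u' j"
        using less_iff(2)[of j "Suc k"] j Suc.prems by (simp add: not_less[symmetric])
      then show ?thesis using j by simp
    qed
  qed
  show ?thesis
    using k
  proof (induction rule: inc_induct)
    case base
    then show ?case using ends by simp
  next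
    case (step k)
    have next_eq: "u (k + 1) = u' (k + 1)" using step by simp
    have "u k < u (k + 1)" using less_iff(1)[of k "k + 1"] step.hyps by simp
    show ?case
    proof (cases "k = 0")
      case True
      then show ?thesis using ends by simp
    next
      case False
      have "0 < k" "k < n" using False step.hyps by simp_all
      from hit[OF this] show ?thesis
      proof (elim disjE bexE exE conjE)
        fix j assume j: "j \<le> n" "u k = u' j"
        have "\<not> u' j < u' k" using below[of k] j step.hyps by simp
        then have "k \<le> j" using less_iff(2)[of j k] j step.hyps by simp
        moreover have "u' j < u' (k + 1)" using \<open>u k < u (k + 1)\<close> next_eq j by simp
        then have "j < k + 1" using less_iff(2)[of j "k + 1"] j step.hyps by simp
        ultimately have "j = k" by simp
        then show ?thesis using j by simp
      next
        fix j assume j: "j \<in> {1..n}" "u k < u' j" "u' j < u (k + 1)"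
        then have "j < k + 1" using less_iff(2)[of j "k + 1"] next_eq step.hyps by simp
        then have "u' j \<le> u' k" using less_iff(2)[of k j] j step.hyps by (simp add: not_less[symmetric])
        then show ?thesis using j below[of k] step.hyps by simp
      qed
    qed
  qed
qed

section \<open>Degradation and random switching channels\<close>

text \<open>The test function is pulled back along the degrading channel \<open>T\<close>; the inequality is
  \<open>\<Sum> min (x\<^sub>k) (y\<^sub>k) \<le> min (\<Sum> x\<^sub>k) (\<Sum> y\<^sub>k)\<close>.\<close>

lemma degraded_test_transfer:
  assumes "degraded W W'" "finite (fst W)" "finite (fst W')"
    and f: "\<And>y. y \<in> fst W \<Longrightarrow> 0 \<le> f y \<and> f y \<le> 1"
  obtains f' where "\<And>y. y \<in> fst W' \<Longrightarrow> 0 \<le> f' y \<and> f' y \<le> 1"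
    and "(\<Sum>y\<in>fst W'. f' y * (snd W' 0 y + snd W' 1 y)) = (\<Sum>y\<in>fst W. f y * (snd W 0 y + snd W 1 y))"
    and "(\<Sum>y\<in>fst W'. f' y * min (snd W' 0 y) (snd W' 1 y)) \<le> (\<Sum>y\<in>fst W. f y * min (snd W 0 y) (snd W 1 y))"
proof -
  obtain T where T_nonneg: "\<And>y y'. y \<in> fst W' \<Longrightarrow> y' \<in> fst W \<Longrightarrow> 0 \<le> T y y'"
    and T_sum: "\<And>y. y \<in> fst W' \<Longrightarrow> (\<Sum>y'\<in>fst W. T y y') = 1"
    and T_out: "\<And>a y'. a \<in> {0, 1} \<Longrightarrow> y' \<in> fst W \<Longrightarrow> snd W a y' = (\<Sum>y\<in>fst W'. snd W' a y * T y y')"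
    using assms(1) unfolding degraded_def by blast
  define f' where "f' y = (\<Sum>y'\<in>fst W. T y y' * f y')" for y
  have "0 \<le> f' y \<and> f' y \<le> 1" if "y \<in> fst W'" for y
  proof
    show "0 \<le> f' y" unfolding f'_def using T_nonneg f that by (intro sum_nonneg) auto
    have "f' y \<le> (\<Sum>y'\<in>fst W. T y y' * 1)" unfolding f'_def
      using T_nonneg f that by (intro sum_mono mult_left_mono) auto
    then show "f' y \<le> 1" using T_sum that by simp
  qed
  moreover have "(\<Sum>y\<in>fst W'. f' y * (snd W' 0 y + snd W' 1 y)) = (\<Sum>y\<in>fst W. f y * (snd W 0 y + snd W 1 y))"
  proof -
    have "(\<Sum>y\<in>fst W'. f' y * (snd W' 0 y + snd W' 1 y))
        = (\<Sum>y'\<in>fst W. \<Sum>y\<in>fst W'. f y' * ((snd W' 0 y + snd W' 1 y) * T y y'))"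
      unfolding f'_def sum_distrib_right by (subst sum.swap) (simp add: algebra_simps)
    also have "\<dots> = (\<Sum>y'\<in>fst W. f y' * (snd W 0 y' + snd W 1 y'))"
      using T_out by (intro sum.cong refl) (simp add: sum_distrib_left[symmetric] sum.distrib algebra_simps)
    finally show ?thesis .
  qed
  moreover have "(\<Sum>y\<in>fst W'. f' y * min (snd W' 0 y) (snd W' 1 y)) \<le> (\<Sum>y\<in>fst W. f y * min (snd W 0 y) (snd W 1 y))"
  proof -
    have "(\<Sum>y\<in>fst W'. f' y * min (snd W' 0 y) (snd W' 1 y))
        = (\<Sum>y'\<in>fst W. f y' * (\<Sum>y\<in>fst W'. min (snd W' 0 y) (snd W' 1 y) * T y y'))"
      unfolding f'_def sum_distrib_right sum_distrib_left by (subst sum.swap) (simp add: algebra_simps)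
    also have "\<dots> \<le> (\<Sum>y'\<in>fst W. f y' * min (snd W 0 y') (snd W 1 y'))"
    proof (intro sum_mono mult_left_mono)
      fix y' assume y': "y' \<in> fst W"
      have "(\<Sum>y\<in>fst W'. min (snd W' 0 y) (snd W' 1 y) * T y y') \<le> (\<Sum>y\<in>fst W'. snd W' a y * T y y')"
        if "a \<in> {0, 1}" for a
        using T_nonneg y' that by (intro sum_mono mult_right_mono) auto
      then show "(\<Sum>y\<in>fst W'. min (snd W' 0 y) (snd W' 1 y) * T y y') \<le> min (snd W 0 y') (snd W 1 y')"
        using T_out[OF _ y'] by simp
      show "0 \<le> f y'" using f y' by simp
    qed
    finally show ?thesis .
  qed
  ultimately show ?thesis using that by blast
qed

lemma bsc_mix_outputs: "fst (bsc_mix J p e) = (\<lambda>j. 2 * j) ` J \<union> (\<lambda>j. 2 * j + 1) ` J"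
proof -
  have "y \<in> (\<lambda>j. 2 * j) ` J \<union> (\<lambda>j. 2 * j + 1) ` J" if "y div 2 \<in> J" for y :: nat
    using that by (cases "even y") (auto elim!: evenE oddE)
  then show ?thesis unfolding bsc_mix_def by auto
qed

lemma finite_bsc_mix_outputs: "finite J \<Longrightarrow> finite (fst (bsc_mix J p e))"
  by (simp add: bsc_mix_outputs)

lemma sum_bsc_mix_outputs:
  fixes h :: "nat \<Rightarrow> 'a::comm_monoid_add"
  assumes "finite J"
  shows "(\<Sum>y\<in>fst (bsc_mix J p e). h y) = (\<Sum>j\<in>J. h (2 * j) + h (2 * j + 1))"
proof -
  have "(\<Sum>y\<in>fst (bsc_mix J p e). h y) = (\<Sum>y\<in>(\<lambda>j. 2 * j) ` J. h y) + (\<Sum>y\<in>(\<lambda>j. 2 * j + 1) ` J. h y)"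
    unfolding bsc_mix_outputs using assms by (intro sum.union_disjoint) (auto, presburger)
  also have "\<dots> = (\<Sum>j\<in>J. h (2 * j)) + (\<Sum>j\<in>J. h (2 * j + 1))"
    by (simp add: sum.reindex inj_on_def)
  finally show ?thesis by (simp add: sum.distrib)
qed

lemma bsc_mix_sum_total:
  assumes "finite J"
  shows "(\<Sum>y\<in>fst (bsc_mix J p e). h y * (snd (bsc_mix J p e) 0 y + snd (bsc_mix J p e) 1 y))
    = (\<Sum>j\<in>J. p j * (h (2 * j) + h (2 * j + 1)))"
  unfolding sum_bsc_mix_outputs[OF assms] by (intro sum.cong) (simp_all add: bsc_mix_def algebra_simps)

lemma bsc_mix_sum_min:
  assumes "finite J" "\<And>j. j \<in> J \<Longrightarrow> 0 \<le> p j" "\<And>j. j \<in> J \<Longrightarrow> e j \<le> 1/2"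
  shows "(\<Sum>y\<in>fst (bsc_mix J p e). h y * min (snd (bsc_mix J p e) 0 y) (snd (bsc_mix J p e) 1 y))
    = (\<Sum>j\<in>J. p j * e j * (h (2 * j) + h (2 * j + 1)))"
  unfolding sum_bsc_mix_outputs[OF assms(1)]
proof (intro sum.cong refl)
  fix j assume "j \<in> J"
  then have "p j * e j \<le> p j * (1 - e j)"
    using assms(2) assms(3)[of j] by (intro mult_left_mono) auto
  then have "min (p j * (1 - e j)) (p j * e j) = p j * e j" by simp
  then show "h (2 * j) * min (snd (bsc_mix J p e) 0 (2 * j)) (snd (bsc_mix J p e) 1 (2 * j))
      + h (2 * j + 1) * min (snd (bsc_mix J p e) 0 (2 * j + 1)) (snd (bsc_mix J p e) 1 (2 * j + 1))
      = p j * e j * (h (2 * j) + h (2 * j + 1))"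
    by (simp add: bsc_mix_def min.commute algebra_simps)
qed

lemma bsc_mix_equiv:
  assumes "\<And>j. j \<in> J \<Longrightarrow> p j = p' j \<and> e j = e' j"
  shows "chan_equiv (bsc_mix J p e) (bsc_mix J p' e')"
proof -
  have "fst (bsc_mix J p e) = fst (bsc_mix J p' e')" by (simp add: bsc_mix_def)
  moreover have "snd (bsc_mix J p e) x y = snd (bsc_mix J p' e') x y" if "y \<in> fst (bsc_mix J p e)" for x y
    using that assms by (simp add: bsc_mix_def)
  ultimately show ?thesis
    unfolding chan_equiv_def lr_profile_def by (intro ballI sum.cong) auto
qed

section \<open>The mass axis of \<open>Q\<close>\<close>

text \<open>Atom \<open>b\<close> of \<open>Q\<close> occupies \<open>[cum_mass m q (b - 1), cum_mass m q b]\<close> on the mass axis;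
  \<open>mass_below m q b y\<close> is its part below level \<open>y\<close>, and \<open>err_integral m q \<sigma> y\<close> integrates the
  crossover probability over \<open>[0, y]\<close>.\<close>

definition cum_mass :: "nat \<Rightarrow> (nat \<Rightarrow> real) \<Rightarrow> nat \<Rightarrow> real" where
  "cum_mass m q a = (\<Sum>b\<le>a. qx m q b)"

definition mass_below :: "nat \<Rightarrow> (nat \<Rightarrow> real) \<Rightarrow> nat \<Rightarrow> real \<Rightarrow> real" where
  "mass_below m q b y = max 0 (min (qx m q b) (y - cum_mass m q (b - 1)))"

definition err_integral :: "nat \<Rightarrow> (nat \<Rightarrow> real) \<Rightarrow> (nat \<Rightarrow> real) \<Rightarrow> real \<Rightarrow> real" where
  "err_integral m q \<sigma> y = (\<Sum>b\<in>{1..m}. \<sigma> b * mass_below m q b y)"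

text \<open>Subtracting the line of slope \<open>\<sigma> a\<close> from \<open>err_integral\<close> leaves a nondecreasing
  contribution of the atoms above \<open>a\<close> minus a nondecreasing contribution of the atoms below.\<close>

definition deficit_below :: "nat \<Rightarrow> (nat \<Rightarrow> real) \<Rightarrow> (nat \<Rightarrow> real) \<Rightarrow> nat \<Rightarrow> real \<Rightarrow> real" where
  "deficit_below m q \<sigma> a y = (\<Sum>b\<in>{1..<a}. (\<sigma> a - \<sigma> b) * mass_below m q b y)"

definition excess_above :: "nat \<Rightarrow> (nat \<Rightarrow> real) \<Rightarrow> (nat \<Rightarrow> real) \<Rightarrow> nat \<Rightarrow> real \<Rightarrow> real" where
  "excess_above m q \<sigma> a y = (\<Sum>b\<in>{a<..m}. (\<sigma> b - \<sigma> a) * mass_below m q b y)"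

locale sorted_bsc_mix =
  fixes m :: nat and q \<sigma> :: "nat \<Rightarrow> real"
  assumes q_pos: "\<And>b. b \<in> {1..m} \<Longrightarrow> 0 < q b"
    and \<sigma>_less: "\<And>b. b \<in> {1..<m} \<Longrightarrow> \<sigma> b < \<sigma> (b + 1)"
begin

abbreviation cum :: "nat \<Rightarrow> real" where
  "cum \<equiv> cum_mass m q"

abbreviation G :: "real \<Rightarrow> real" where
  "G \<equiv> err_integral m q \<sigma>"

lemma qx_nonneg: "0 \<le> qx m q b"
  using q_pos by (auto simp: qx_def less_imp_le)

lemma qx_pos: "b \<in> {1..m} \<Longrightarrow> 0 < qx m q b"
  using q_pos by (simp add: qx_def)

lemma qx_outside [simp]: "qx m q 0 = 0" "qx m q (Suc m) = 0"
  by (simp_all add: qx_def)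

lemma cum_0 [simp]: "cum 0 = 0"
  by (simp add: cum_mass_def)

lemma cum_Suc: "cum (Suc a) = cum a + qx m q (Suc a)"
  by (simp add: cum_mass_def)

lemma cum_Suc_m [simp]: "cum (Suc m) = cum m"
  by (simp add: cum_Suc)

lemma cum_minus_qx: "cum a - qx m q a = cum (a - 1)"
  by (cases a) (simp_all add: cum_Suc)

lemma cum_mono: "a \<le> a' \<Longrightarrow> cum a \<le> cum a'"
  unfolding cum_mass_def by (intro sum_mono2) (auto simp: qx_nonneg)

lemma cum_nonneg: "0 \<le> cum a"
  using cum_mono[of 0 a] by simp

lemma cum_strict_mono: "a < a' \<Longrightarrow> a' \<le> m \<Longrightarrow> cum a < cum a'"
proof -
  assume "a < a'" "a' \<le> m"
  then have "cum a \<le> cum (a' - 1)" by (intro cum_mono) auto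
  also have "\<dots> < cum (a' - 1) + qx m q a'" using qx_pos[of a'] \<open>a < a'\<close> \<open>a' \<le> m\<close> by simp
  also have "\<dots> = cum a'" using cum_minus_qx[of a'] by simp
  finally show ?thesis .
qed

lemma cum_less_imp_less: "cum a < cum a' \<Longrightarrow> a < a'"
  using cum_mono[of a' a] by force

lemma no_cum_inside_atom: "cum (a - 1) < cum c \<Longrightarrow> cum c < cum a \<Longrightarrow> False"
  using cum_less_imp_less[of "a - 1" c] cum_less_imp_less[of c a] by simp

lemma cum_pair_in_atom:
  assumes "a \<in> {1..m}" "cum (a - 1) \<le> cum c" "cum c < cum d" "cum d \<le> cum a"
  shows "cum c = cum (a - 1) \<and> cum d = cum a"
proof -
  have "\<not> c < a - 1"
  proof
    assume "c < a - 1"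
    moreover have "a - 1 \<le> m" using assms(1) by auto
    ultimately have "cum c < cum (a - 1)" by (rule cum_strict_mono)
    then show False using assms(2) by simp
  qed
  moreover have "\<not> a \<le> c" using cum_mono[of a c] assms(3,4) by auto
  ultimately have "c = a - 1" by simp
  moreover have "cum a \<le> cum d"
    using cum_less_imp_less[OF assms(3)] \<open>c = a - 1\<close> assms(1) by (intro cum_mono) auto
  ultimately show ?thesis using assms(4) by simp
qed

lemma \<sigma>_strict_mono: "1 \<le> b \<Longrightarrow> b < a \<Longrightarrow> a \<le> m \<Longrightarrow> \<sigma> b < \<sigma> a"
proof (induction a)
  case 0
  then show ?case by simp
next
  case (Suc a)
  have "\<sigma> a < \<sigma> (Suc a)" using \<sigma>_less Suc.prems by auto
  then show ?case using Suc by (cases "b = a") auto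
qed

lemma mass_below_full: "1 \<le> b \<Longrightarrow> cum b \<le> y \<Longrightarrow> mass_below m q b y = qx m q b"
  unfolding mass_below_def using cum_minus_qx[of b] qx_nonneg[of b] by (simp add: max_def min_def)

lemma mass_below_empty: "y \<le> cum (b - 1) \<Longrightarrow> mass_below m q b y = 0"
  unfolding mass_below_def using qx_nonneg[of b] by (simp add: max_def min_def)

lemma mass_below_mono: "y \<le> y' \<Longrightarrow> mass_below m q b y \<le> mass_below m q b y'"
  unfolding mass_below_def by (simp add: max_def min_def)

lemma sum_mass_below: "0 \<le> y \<Longrightarrow> (\<Sum>b\<in>{1..M}. mass_below m q b y) = min y (cum M)"
  unfolding mass_below_def cum_mass_def by (rule sum_truncated_parts) (auto simp: qx_nonneg)

lemma sum_mass_below_all: "0 \<le> y \<Longrightarrow> y \<le> cum m \<Longrightarrow> (\<Sum>b\<in>{1..m}. mass_below m q b y) = y"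
  using sum_mass_below[of y m] by simp

lemma err_integral_cum_minus:
  assumes "a \<le> Suc m" "0 \<le> t" "t \<le> qx m q a"
  shows "G (cum a - t) = (\<Sum>b\<le>a. qx m q b * \<sigma> b) - t * \<sigma> a"
proof -
  have part: "\<sigma> b * mass_below m q b (cum a - t) =
      (if b \<le> a then qx m q b * \<sigma> b else 0) - (if b = a then t * \<sigma> b else 0)" if "b \<in> {1..m}" for b
  proof -
    consider "b < a" | "b = a" | "a < b" by linarith
    then show ?thesis
    proof cases
      case 1
      have "cum b \<le> cum (a - 1)" using 1 by (intro cum_mono) auto
      also have "\<dots> \<le> cum a - t" using cum_minus_qx[of a] assms by simp
      finally show ?thesis using mass_below_full[of b] that 1 by simp
    next
      case 2
      then show ?thesis unfolding mass_below_def using cum_minus_qx[of a] that assms qx_nonneg[of a]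
        by (simp add: max_def min_def algebra_simps)
    next
      case 3
      have "cum a - t \<le> cum (b - 1)" using cum_mono[of a "b - 1"] 3 assms by force
      then show ?thesis using mass_below_empty 3 by simp
    qed
  qed
  have "G (cum a - t) = (\<Sum>b\<in>{1..m}. if b \<le> a then qx m q b * \<sigma> b else 0)
      - (\<Sum>b\<in>{1..m}. if b = a then t * \<sigma> b else 0)"
    unfolding err_integral_def sum_subtractf[symmetric] using part by (intro sum.cong) auto
  also have "(\<Sum>b\<in>{1..m}. if b = a then t * \<sigma> b else 0) = t * \<sigma> a"
  proof (cases "a \<in> {1..m}")
    case False
    then have "t = 0" using assms unfolding qx_def by auto
    then show ?thesis by simp
  qed simp
  also have "(\<Sum>b\<in>{1..m}. if b \<le> a then qx m q b * \<sigma> b else 0) = (\<Sum>b\<le>a. qx m q b * \<sigma> b)"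
  proof -
    have "(\<Sum>b\<in>{1..m}. if b \<le> a then qx m q b * \<sigma> b else 0) = (\<Sum>b\<in>{1..m} \<inter> {..a}. qx m q b * \<sigma> b)"
      by (subst sum.inter_restrict) (auto intro!: sum.cong)
    also have "\<dots> = (\<Sum>b\<le>a. qx m q b * \<sigma> b)"
      by (rule sum.mono_neutral_left) (auto simp: qx_def)
    finally show ?thesis .
  qed
  finally show ?thesis .
qed

context
  fixes a :: nat
  assumes a: "a \<in> {1..m}"
begin

lemma weight_below_pos: "b \<in> {1..<a} \<Longrightarrow> 0 < \<sigma> a - \<sigma> b"
  using \<sigma>_strict_mono a by auto

lemma weight_above_pos: "b \<in> {a<..m} \<Longrightarrow> 0 < \<sigma> b - \<sigma> a"
  using \<sigma>_strict_mono a by auto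

lemma err_integral_eq_line:
  assumes "0 \<le> y" "y \<le> cum m"
  shows "G y = \<sigma> a * y + excess_above m q \<sigma> a y - deficit_below m q \<sigma> a y"
proof -
  have "\<sigma> a * y = (\<Sum>b\<in>{1..m}. \<sigma> a * mass_below m q b y)"
    unfolding sum_distrib_left[symmetric] using sum_mass_below_all[OF assms] by simp
  then have "G y - \<sigma> a * y = (\<Sum>b\<in>{1..m}. (\<sigma> b - \<sigma> a) * mass_below m q b y)"
    by (simp add: err_integral_def sum_subtractf left_diff_distrib)
  also have "\<dots> = (\<Sum>b\<in>{1..<a}. (\<sigma> b - \<sigma> a) * mass_below m q b y)
      + (\<Sum>b\<in>{a<..m}. (\<sigma> b - \<sigma> a) * mass_below m q b y)"
    using sum_split_at[OF a, of "\<lambda>b. (\<sigma> b - \<sigma> a) * mass_below m q b y"] by simp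
  also have "(\<Sum>b\<in>{1..<a}. (\<sigma> b - \<sigma> a) * mass_below m q b y) = - deficit_below m q \<sigma> a y"
    unfolding deficit_below_def sum_negf[symmetric] by (intro sum.cong) (simp_all add: algebra_simps)
  finally show ?thesis unfolding excess_above_def by simp
qed

lemma deficit_below_mono: "y \<le> y' \<Longrightarrow> deficit_below m q \<sigma> a y \<le> deficit_below m q \<sigma> a y'"
  unfolding deficit_below_def using weight_below_pos
  by (intro sum_mono mult_left_mono mass_below_mono) (auto intro: less_imp_le)

lemma excess_above_mono: "y \<le> y' \<Longrightarrow> excess_above m q \<sigma> a y \<le> excess_above m q \<sigma> a y'"
  unfolding excess_above_def using weight_above_pos
  by (intro sum_mono mult_left_mono mass_below_mono) (auto intro: less_imp_le)

lemma deficit_below_strict: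
  assumes "0 \<le> y" "y < y'" "y < cum (a - 1)"
  shows "deficit_below m q \<sigma> a y < deficit_below m q \<sigma> a y'"
proof -
  have "{1..<a} = {1..a - 1}" using a by auto
  then have "(\<Sum>b\<in>{1..<a}. mass_below m q b y' - mass_below m q b y) = min y' (cum (a - 1)) - min y (cum (a - 1))"
    using sum_mass_below[of y] sum_mass_below[of y'] assms by (simp add: sum_subtractf)
  also have "\<dots> > 0" using assms by (simp add: min_def)
  finally have "0 < (\<Sum>b\<in>{1..<a}. (\<sigma> a - \<sigma> b) * (mass_below m q b y' - mass_below m q b y))"
    using weight_below_pos mass_below_mono[of y y'] assms by (intro sum_weighted_pos) auto
  then show ?thesis unfolding deficit_below_def by (simp only: right_diff_distrib sum_subtractf)
qed

lemma excess_above_strict: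
  assumes "0 \<le> y" "y < y'" "cum a < y'" "y' \<le> cum m"
  shows "excess_above m q \<sigma> a y < excess_above m q \<sigma> a y'"
proof -
  have above: "(\<Sum>b\<in>{a<..m}. mass_below m q b z) = z - min z (cum a)" if "0 \<le> z" "z \<le> cum m" for z
  proof -
    have "{1..m} = {1..a} \<union> {a<..m}" using a by auto
    then have "(\<Sum>b\<in>{1..m}. mass_below m q b z)
        = (\<Sum>b\<in>{1..a}. mass_below m q b z) + (\<Sum>b\<in>{a<..m}. mass_below m q b z)"
      by (simp add: sum.union_disjoint ivl_disj_int)
    then show ?thesis using sum_mass_below_all[OF that] sum_mass_below[OF that(1), of a] by simp
  qed
  have "(\<Sum>b\<in>{a<..m}. mass_below m q b y' - mass_below m q b y) = (y' - min y' (cum a)) - (y - min y (cum a))"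
    using above[of y] above[of y'] assms by (simp add: sum_subtractf)
  also have "\<dots> > 0" using assms by (auto simp: min_def)
  finally have "0 < (\<Sum>b\<in>{a<..m}. (\<sigma> b - \<sigma> a) * (mass_below m q b y' - mass_below m q b y))"
    using weight_above_pos mass_below_mono[of y y'] assms by (intro sum_weighted_pos) auto
  then show ?thesis unfolding excess_above_def by (simp only: right_diff_distrib sum_subtractf)
qed

lemma deficit_below_0: "deficit_below m q \<sigma> a 0 = 0"
  unfolding deficit_below_def using cum_nonneg by (simp add: mass_below_empty)

lemma deficit_below_saturated:
  assumes "cum (a - 1) \<le> y"
  shows "deficit_below m q \<sigma> a y = deficit_below m q \<sigma> a (cum m)"
proof -
  have "mass_below m q b y = mass_below m q b (cum m)" if "b \<in> {1..<a}" for b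
  proof -
    have "cum b \<le> cum (a - 1)" "cum (a - 1) \<le> cum m" using that a by (auto intro: cum_mono)
    then show ?thesis using assms that by (simp add: mass_below_full)
  qed
  then show ?thesis unfolding deficit_below_def by simp
qed

lemma excess_above_vanishes: "y \<le> cum a \<Longrightarrow> excess_above m q \<sigma> a y = 0"
proof -
  assume "y \<le> cum a"
  have "mass_below m q b y = 0" if "b \<in> {a<..m}" for b
  proof -
    have "cum a \<le> cum (b - 1)" using that by (intro cum_mono) auto
    then show ?thesis using \<open>y \<le> cum a\<close> by (intro mass_below_empty) simp
  qed
  then show ?thesis unfolding excess_above_def by simp
qed

lemma weighted_err_increments_gap:
  fixes t g :: "nat \<Rightarrow> real"
  assumes u: "cum (a - 1) \<le> u" "u \<le> cum a"
    and t: "\<And>k. k \<le> n \<Longrightarrow> 0 \<le> t k \<and> t k \<le> cum m" "t 0 = 0" "t n = cum m"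
    and mass: "(\<Sum>j\<in>{1..n}. g j * (t j - t (j - 1))) = u"
  shows "(\<Sum>j\<in>{1..n}. g j * (G (t j) - G (t (j - 1)))) - G u
    = (\<Sum>j\<in>{1..n}. g j * (excess_above m q \<sigma> a (t j) - excess_above m q \<sigma> a (t (j - 1)))
        + (1 - g j) * (deficit_below m q \<sigma> a (t j) - deficit_below m q \<sigma> a (t (j - 1))))"
proof -
  let ?D = "deficit_below m q \<sigma> a" and ?E = "excess_above m q \<sigma> a"
  define dD where "dD k = ?D (t k) - ?D (t (k - 1))" for k
  define dE where "dE k = ?E (t k) - ?E (t (k - 1))" for k
  have "(\<Sum>k\<in>{1..n}. g k * (dE k - dD k))
      = (\<Sum>k\<in>{1..n}. g k * (G (t k) - G (t (k - 1))) - \<sigma> a * (g k * (t k - t (k - 1))))"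
  proof (intro sum.cong refl)
    fix k assume "k \<in> {1..n}"
    then have "k \<le> n" "k - 1 \<le> n" by auto
    then have line: "G (t k) = \<sigma> a * t k + ?E (t k) - ?D (t k)"
      "G (t (k - 1)) = \<sigma> a * t (k - 1) + ?E (t (k - 1)) - ?D (t (k - 1))"
      using err_integral_eq_line t(1) by auto
    then show "g k * (dE k - dD k) = g k * (G (t k) - G (t (k - 1))) - \<sigma> a * (g k * (t k - t (k - 1)))"
      unfolding dD_def dE_def line by (simp add: algebra_simps)
  qed
  also have "\<dots> = (\<Sum>k\<in>{1..n}. g k * (G (t k) - G (t (k - 1)))) - \<sigma> a * u"
    using mass by (simp add: sum_subtractf sum_distrib_left[symmetric])
  moreover have "G u - \<sigma> a * u = ?E u - ?D u"
    using err_integral_eq_line u cum_nonneg[of "a - 1"] cum_mono[of a m] a by force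
  moreover have "\<dots> = - (\<Sum>k\<in>{1..n}. dD k)"
    using excess_above_vanishes u(2) deficit_below_saturated u(1) deficit_below_0
      sum_telescope''[of 0 n "\<lambda>k. ?D (t k)"] t(2,3) unfolding dD_def by simp
  ultimately show ?thesis
    unfolding dD_def[symmetric] dE_def[symmetric] by (simp add: algebra_simps sum.distrib sum_subtractf)
qed

text \<open>Comparison with the supporting line of the convex function \<open>G\<close> at \<open>u\<close>, whose slope is
  \<open>\<sigma> a\<close>: a fractional selection of the intervals \<open>[t (j - 1), t j]\<close> of total mass \<open>u\<close> can
  only be as cheap as \<open>G u\<close> if it takes every interval reaching below the atom \<open>a\<close> in full
  and nothing of any interval reaching above it.\<close>

lemma supporting_line_forces_weights:
  fixes t g :: "nat \<Rightarrow> real"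
  assumes u: "cum (a - 1) \<le> u" "u \<le> cum a"
    and t: "strict_mono_on {..n} t" "t 0 = 0" "t n = cum m"
    and g: "\<And>j. j \<in> {1..n} \<Longrightarrow> 0 \<le> g j \<and> g j \<le> 1"
    and mass: "(\<Sum>j\<in>{1..n}. g j * (t j - t (j - 1))) = u"
    and err: "(\<Sum>j\<in>{1..n}. g j * (G (t j) - G (t (j - 1)))) \<le> G u"
    and j: "j \<in> {1..n}"
  shows "t (j - 1) < cum (a - 1) \<Longrightarrow> g j = 1" and "cum a < t j \<Longrightarrow> g j = 0"
proof -
  define dD where "dD k = deficit_below m q \<sigma> a (t k) - deficit_below m q \<sigma> a (t (k - 1))" for k
  define dE where "dE k = excess_above m q \<sigma> a (t k) - excess_above m q \<sigma> a (t (k - 1))" for k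
  have t_range: "0 \<le> t k \<and> t k \<le> cum m" if "k \<le> n" for k
    using strict_mono_on_less_eq[OF t(1), of 0 k] strict_mono_on_less_eq[OF t(1), of k n] t(2,3) that
    by auto
  have t_step: "t (k - 1) < t k" if "k \<in> {1..n}" for k
    using strict_mono_onD[OF t(1), of "k - 1" k] that by auto
  have nonneg: "0 \<le> g k * dE k \<and> 0 \<le> (1 - g k) * dD k" if "k \<in> {1..n}" for k
    using t_step[OF that] g[OF that] deficit_below_mono excess_above_mono
    unfolding dD_def dE_def by (simp add: less_imp_le)
  have "(\<Sum>k\<in>{1..n}. g k * dE k + (1 - g k) * dD k) \<le> 0"
    using weighted_err_increments_gap[OF u t_range t(2,3) mass] err unfolding dD_def dE_def by simp
  then have "(\<Sum>k\<in>{1..n}. g k * dE k + (1 - g k) * dD k) = 0"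
    using nonneg by (intro antisym sum_nonneg) auto
  then have "g j * dE j + (1 - g j) * dD j = 0"
    using nonneg j by (subst (asm) sum_nonneg_eq_0_iff) (auto intro: add_nonneg_nonneg)
  then have zero: "g j * dE j = 0 \<and> (1 - g j) * dD j = 0"
    using nonneg[OF j] by linarith
  have "j - 1 \<le> n" "j \<le> n" using j by auto
  show "g j = 1" if "t (j - 1) < cum (a - 1)"
  proof -
    have "0 < dD j"
      using deficit_below_strict[OF _ t_step[OF j] that] t_range[OF \<open>j - 1 \<le> n\<close>] unfolding dD_def by simp
    then show ?thesis using zero by simp
  qed
  show "g j = 0" if "cum a < t j"
  proof -
    have "0 < dE j"
      using excess_above_strict[OF _ t_step[OF j] that] t_range[OF \<open>j - 1 \<le> n\<close>] t_range[OF \<open>j \<le> n\<close>]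
      unfolding dE_def by simp
    then show ?thesis using zero by simp
  qed
qed

end

end

section \<open>The channels \<open>D\<^sub>Q\<close>\<close>

text \<open>Component \<open>j\<close> of \<open>D\<^sub>Q(i, s)\<close> collects the part of \<open>Q\<close> on the mass interval
  \<open>[knot (j - 1), knot j]\<close>.\<close>

definition knot :: "nat \<Rightarrow> (nat \<Rightarrow> real) \<Rightarrow> nat \<Rightarrow> (nat \<Rightarrow> nat) \<Rightarrow> (nat \<Rightarrow> real) \<Rightarrow> nat \<Rightarrow> real" where
  "knot m q n i s k = cum_mass m q (ix m n i (k + 1)) - sx n s (k + 1)"

text \<open>Conditions (i) and (iii) of a \<open>2n\<close>-P\<open>\<^sup>*\<close>-degradation, with the ordering of the
  crossover probabilities weakened to \<open>\<epsilon>\<^sub>j \<le> 1/2\<close>.\<close>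

locale dq_split = sorted_bsc_mix +
  fixes n :: nat and i :: "nat \<Rightarrow> nat" and s :: "nat \<Rightarrow> real"
  assumes n_pos: "1 \<le> n"
    and valid: "DQ_valid m q n i s"
    and p_pos: "\<And>j. j \<in> {1..n} \<Longrightarrow> 0 < DQ_p m q n i s j"
    and eps_le_half: "\<And>j. j \<in> {1..n} \<Longrightarrow> DQ_eps m q \<sigma> n i s j \<le> 1/2"
    and splitting: "\<And>j. j \<in> {1..n} \<Longrightarrow> ix m n i (j + 1) = ix m n i j + 1 \<Longrightarrow>
        (sx n s j = 0 \<longrightarrow> sx n s (j + 1) = 0) \<and>
        (sx n s (j + 1) = qx m q (ix m n i (j + 1)) \<longrightarrow> sx n s j = qx m q (ix m n i j))"
begin

abbreviation K :: "nat \<Rightarrow> real" where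
  "K \<equiv> knot m q n i s"

abbreviation p :: "nat \<Rightarrow> real" where
  "p \<equiv> DQ_p m q n i s"

abbreviation pe :: "nat \<Rightarrow> real" where
  "pe \<equiv> DQ_pe m q \<sigma> n i s"

lemma split_point_bounds:
  assumes "k \<le> n"
  shows "ix m n i (k + 1) \<le> Suc m \<and> 0 \<le> sx n s (k + 1) \<and> sx n s (k + 1) \<le> qx m q (ix m n i (k + 1))"
proof -
  consider "k = 0" | "k = n" | "1 \<le> k \<and> k < n" using assms by linarith
  then show ?thesis
  proof cases
    case 3
    then have "k + 1 \<in> {2..n}" by auto
    then have "1 \<le> i (k + 1) \<and> i (k + 1) \<le> m \<and> 0 \<le> s (k + 1) \<and> s (k + 1) \<le> q (i (k + 1))"
      using valid unfolding DQ_valid_def by blast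
    then show ?thesis using 3 unfolding ix_def sx_def qx_def by auto
  qed (use n_pos in \<open>auto simp: ix_def sx_def\<close>)
qed

lemma split_point_interior: "1 \<le> k \<Longrightarrow> k < n \<Longrightarrow> ix m n i (k + 1) \<in> {1..m}"
  using valid unfolding DQ_valid_def ix_def by auto

lemma split_point_less:
  assumes j: "j \<in> {1..n}"
  shows "ix m n i j < ix m n i (j + 1)"
proof -
  have bounds: "1 \<le> i j' \<and> i j' \<le> m" if "j' \<in> {2..n}" for j'
    using valid that unfolding DQ_valid_def by blast
  consider "j = 1" "n = 1" | "j = 1" "2 \<le> n" | "2 \<le> j" "j = n" | "2 \<le> j" "j < n"
    using j by force
  then show ?thesis
  proof cases
    case 2
    then show ?thesis using bounds[of 2] by (simp add: ix_def numeral_2_eq_2)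
  next
    case 3
    then show ?thesis using bounds[of n] by (simp add: ix_def)
  next
    case 4
    then have "i j < i (j + 1)" using valid unfolding DQ_valid_def by auto
    then show ?thesis using 4 by (simp add: ix_def)
  qed (simp add: ix_def)
qed

lemma knot_0 [simp]: "K 0 = 0"
  by (simp add: knot_def ix_def sx_def)

lemma knot_n [simp]: "K n = cum m"
  using n_pos by (simp add: knot_def ix_def sx_def)

lemma p_eq_knot_diff: "j \<in> {1..n} \<Longrightarrow> p j = K j - K (j - 1)"
proof -
  assume j: "j \<in> {1..n}"
  have "cum (ix m n i (j + 1)) - cum (ix m n i j) =
      (\<Sum>b\<in>{ix m n i j<..<ix m n i (j + 1)}. qx m q b) + qx m q (ix m n i (j + 1))"
    unfolding cum_mass_def using split_point_less[OF j] by (rule sum_atMost_diff)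
  then show ?thesis unfolding DQ_p_def knot_def using j by simp
qed

lemma pe_eq_err_diff: "j \<in> {1..n} \<Longrightarrow> pe j = G (K j) - G (K (j - 1))"
proof -
  assume j: "j \<in> {1..n}"
  have "(\<Sum>b\<le>ix m n i (j + 1). qx m q b * \<sigma> b) - (\<Sum>b\<le>ix m n i j. qx m q b * \<sigma> b) =
      (\<Sum>b\<in>{ix m n i j<..<ix m n i (j + 1)}. qx m q b * \<sigma> b) + qx m q (ix m n i (j + 1)) * \<sigma> (ix m n i (j + 1))"
    using split_point_less[OF j] by (rule sum_atMost_diff)
  moreover have "G (K j) = (\<Sum>b\<le>ix m n i (j + 1). qx m q b * \<sigma> b) - sx n s (j + 1) * \<sigma> (ix m n i (j + 1))"
    unfolding knot_def using split_point_bounds[of j] j by (intro err_integral_cum_minus) auto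
  moreover have "G (K (j - 1)) = (\<Sum>b\<le>ix m n i j. qx m q b * \<sigma> b) - sx n s j * \<sigma> (ix m n i j)"
  proof -
    have jj: "j - 1 + 1 = j" and "j - 1 \<le> n" using j by auto
    then show ?thesis
      using split_point_bounds[of "j - 1"] unfolding knot_def jj by (intro err_integral_cum_minus) auto
  qed
  ultimately show ?thesis unfolding DQ_pe_def by (simp add: algebra_simps)
qed

lemma knot_strict_mono: "strict_mono_on {..n} K"
proof (rule strict_mono_onI)
  fix k k' :: nat
  assume "k \<in> {..n}" "k' \<in> {..n}" "k < k'"
  then show "K k < K k'"
  proof (induction k')
    case 0
    then show ?case by simp
  next
    case (Suc k')
    have "K k' < K (Suc k')" using p_pos[of "Suc k'"] p_eq_knot_diff[of "Suc k'"] Suc.prems by simp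
    then show ?case using Suc by (cases "k = k'") auto
  qed
qed

lemma knot_in_atom:
  assumes "1 \<le> k" "k < n"
  shows "cum (ix m n i (k + 1) - 1) \<le> K k \<and> K k \<le> cum (ix m n i (k + 1))"
  using split_point_bounds[of k] assms cum_minus_qx[of "ix m n i (k + 1)"] unfolding knot_def by auto

text \<open>The only use of the splitting condition (iii).\<close>

lemma knot_interval_covers_atom_or_boundary:
  assumes j: "j \<in> {1..n}"
  shows "(\<exists>c d. K (j - 1) \<le> cum c \<and> cum c < cum d \<and> cum d \<le> K j) \<or> (\<exists>c. K (j - 1) < cum c \<and> cum c < K j)"
proof -
  define \<alpha> \<beta> where "\<alpha> = ix m n i j" and "\<beta> = ix m n i (j + 1)"
  have "\<alpha> < \<beta>" using split_point_less[OF j] unfolding \<alpha>_def \<beta>_def by simp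
  have s_lo: "0 \<le> sx n s j \<and> sx n s j \<le> qx m q \<alpha>"
    using split_point_bounds[of "j - 1"] j unfolding \<alpha>_def \<beta>_def by auto
  have s_hi: "\<beta> \<le> Suc m \<and> 0 \<le> sx n s (j + 1) \<and> sx n s (j + 1) \<le> qx m q \<beta>"
    using split_point_bounds[of j] j unfolding \<alpha>_def \<beta>_def by auto
  have K_lo: "K (j - 1) = cum \<alpha> - sx n s j" and K_hi: "K j = cum \<beta> - sx n s (j + 1)"
    using j unfolding knot_def \<alpha>_def \<beta>_def by auto
  have step: "K (j - 1) < K j" using p_pos[OF j] p_eq_knot_diff[OF j] by simp
  show ?thesis
  proof (cases "\<beta> = \<alpha> + 1")
    case False
    then have "\<alpha> + 1 \<le> \<beta> - 1" using \<open>\<alpha> < \<beta>\<close> by auto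
    then have "cum \<alpha> < cum (\<alpha> + 1)" using s_hi by (intro cum_strict_mono) auto
    moreover have "cum (\<alpha> + 1) \<le> K j"
      using cum_mono[OF \<open>\<alpha> + 1 \<le> \<beta> - 1\<close>] cum_minus_qx[of \<beta>] K_hi s_hi by simp
    ultimately show ?thesis using K_lo s_lo by force
  next
    case True
    have split: "(sx n s j = 0 \<longrightarrow> sx n s (j + 1) = 0) \<and> (sx n s (j + 1) = qx m q \<beta> \<longrightarrow> sx n s j = qx m q \<alpha>)"
      using splitting[OF j] True unfolding \<alpha>_def \<beta>_def by simp
    have cum_\<beta>: "cum \<beta> - qx m q \<beta> = cum \<alpha>" using cum_minus_qx[of \<beta>] True by simp
    consider "sx n s j = 0" | "sx n s (j + 1) = qx m q \<beta>" | "0 < sx n s j" "sx n s (j + 1) < qx m q \<beta>"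
      using s_lo s_hi by linarith
    then show ?thesis
    proof cases
      case 1
      then show ?thesis using split step K_lo K_hi by force
    next
      case 2
      then have "K (j - 1) = cum (\<alpha> - 1)" "K j = cum \<alpha>"
        using split K_lo K_hi cum_minus_qx[of \<alpha>] cum_\<beta> by auto
      then show ?thesis using step by force
    next
      case 3
      then have "K (j - 1) < cum \<alpha> \<and> cum \<alpha> < K j" using K_lo K_hi cum_\<beta> by simp
      then show ?thesis by blast
    qed
  qed
qed

lemma knot_interval_in_atom:
  assumes "j \<in> {1..n}" "a \<in> {1..m}" "cum (a - 1) \<le> K (j - 1)" "K j \<le> cum a"
  shows "K (j - 1) = cum (a - 1) \<and> K j = cum a"
  using knot_interval_covers_atom_or_boundary[OF assms(1)]
proof (elim disjE exE conjE)
  fix c d assume "K (j - 1) \<le> cum c" "cum c < cum d" "cum d \<le> K j"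
  then show ?thesis using cum_pair_in_atom[OF assms(2), of c d] assms(3,4) by simp
next
  fix c assume "K (j - 1) < cum c" "cum c < K j"
  then show ?thesis using no_cum_inside_atom[of a c] assms(3,4) by simp
qed

lemma sum_p_prefix: "k \<le> n \<Longrightarrow> (\<Sum>j\<in>{1..k}. p j) = K k"
  using sum_telescope''[of 0 k K] by (simp add: p_eq_knot_diff)

lemma sum_pe_prefix: "k \<le> n \<Longrightarrow> (\<Sum>j\<in>{1..k}. pe j) = G (K k)"
proof -
  assume "k \<le> n"
  have "G 0 = 0" unfolding err_integral_def using cum_nonneg by (simp add: mass_below_empty)
  then show ?thesis using sum_telescope''[of 0 k "\<lambda>j. G (K j)"] \<open>k \<le> n\<close> by (simp add: pe_eq_err_diff)
qed

lemma DQ_eq_bsc_mix: "DQ m q \<sigma> n i s = bsc_mix {1..n} p (DQ_eps m q \<sigma> n i s)"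
proof -
  have "{j \<in> {1..n}. 0 < p j} = {1..n}" using p_pos by auto
  then show ?thesis unfolding DQ_def by simp
qed

lemma finite_DQ_outputs: "finite (fst (DQ m q \<sigma> n i s))"
  unfolding DQ_eq_bsc_mix by (simp add: finite_bsc_mix_outputs)

lemma DQ_sum_total:
  "(\<Sum>y\<in>fst (DQ m q \<sigma> n i s). h y * (snd (DQ m q \<sigma> n i s) 0 y + snd (DQ m q \<sigma> n i s) 1 y))
    = (\<Sum>j\<in>{1..n}. p j * (h (2 * j) + h (2 * j + 1)))"
  unfolding DQ_eq_bsc_mix by (rule bsc_mix_sum_total) simp

lemma DQ_sum_min:
  "(\<Sum>y\<in>fst (DQ m q \<sigma> n i s). h y * min (snd (DQ m q \<sigma> n i s) 0 y) (snd (DQ m q \<sigma> n i s) 1 y))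
    = (\<Sum>j\<in>{1..n}. pe j * (h (2 * j) + h (2 * j + 1)))"
proof -
  have "p j * DQ_eps m q \<sigma> n i s j = pe j" if "j \<in> {1..n}" for j
    using p_pos[OF that] by (simp add: DQ_eps_def)
  then show ?thesis
    unfolding DQ_eq_bsc_mix using p_pos eps_le_half
    by (subst bsc_mix_sum_min) (auto intro: sum.cong less_imp_le)
qed

lemma DQ_prefix_test:
  assumes "k \<le> n"
  shows "(\<Sum>y\<in>fst (DQ m q \<sigma> n i s). (if y div 2 \<le> k then 1 else 0)
      * (snd (DQ m q \<sigma> n i s) 0 y + snd (DQ m q \<sigma> n i s) 1 y)) = 2 * K k"
    and "(\<Sum>y\<in>fst (DQ m q \<sigma> n i s). (if y div 2 \<le> k then 1 else 0)
      * min (snd (DQ m q \<sigma> n i s) 0 y) (snd (DQ m q \<sigma> n i s) 1 y)) = 2 * G (K k)"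
proof -
  have prefix: "(\<Sum>j\<in>{1..n}. c j * ((if 2 * j div 2 \<le> k then 1 else 0) + (if (2 * j + 1) div 2 \<le> k then 1 else 0)))
      = 2 * (\<Sum>j\<in>{1..k}. c j)" for c :: "nat \<Rightarrow> real"
  proof -
    have "(\<Sum>j\<in>{1..n}. c j * ((if 2 * j div 2 \<le> k then 1 else 0) + (if (2 * j + 1) div 2 \<le> k then 1 else 0)))
        = 2 * (\<Sum>j\<in>{1..n}. if j \<le> k then c j else 0)"
      unfolding sum_distrib_left by (intro sum.cong) auto
    then show ?thesis using sum_if_le_prefix[OF assms, of c] by simp
  qed
  show "(\<Sum>y\<in>fst (DQ m q \<sigma> n i s). (if y div 2 \<le> k then 1 else 0)
      * (snd (DQ m q \<sigma> n i s) 0 y + snd (DQ m q \<sigma> n i s) 1 y)) = 2 * K k"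
    unfolding DQ_sum_total prefix sum_p_prefix[OF assms] ..
  show "(\<Sum>y\<in>fst (DQ m q \<sigma> n i s). (if y div 2 \<le> k then 1 else 0)
      * min (snd (DQ m q \<sigma> n i s) 0 y) (snd (DQ m q \<sigma> n i s) 1 y)) = 2 * G (K k)"
    unfolding DQ_sum_min prefix sum_pe_prefix[OF assms] ..
qed

lemma interval_weight_forced:
  assumes a: "a \<in> {1..m}" and u: "cum (a - 1) \<le> u" "u \<le> cum a"
    and g: "\<And>j. j \<in> {1..n} \<Longrightarrow> 0 \<le> g j \<and> g j \<le> 1"
    and mass: "(\<Sum>j\<in>{1..n}. g j * p j) = u"
    and err: "(\<Sum>j\<in>{1..n}. g j * pe j) \<le> G u"
    and no_atom: "\<not> (\<exists>j\<in>{1..n}. K (j - 1) = cum (a - 1) \<and> K j = cum a)"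
    and j: "j \<in> {1..n}"
  shows "K (j - 1) < cum (a - 1) \<and> g j = 1 \<or> \<not> K (j - 1) < cum (a - 1) \<and> cum a < K j \<and> g j = 0"
proof -
  have mass': "(\<Sum>j\<in>{1..n}. g j * (K j - K (j - 1))) = u"
    unfolding mass[symmetric] by (intro sum.cong refl) (simp add: p_eq_knot_diff)
  have "(\<Sum>j\<in>{1..n}. g j * (G (K j) - G (K (j - 1)))) = (\<Sum>j\<in>{1..n}. g j * pe j)"
    by (intro sum.cong refl) (simp add: pe_eq_err_diff)
  with err have err': "(\<Sum>j\<in>{1..n}. g j * (G (K j) - G (K (j - 1)))) \<le> G u" by simp
  have forced: "K (j - 1) < cum (a - 1) \<Longrightarrow> g j = 1" "cum a < K j \<Longrightarrow> g j = 0"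
    using supporting_line_forces_weights[OF a u knot_strict_mono knot_0 knot_n _ mass' err' j] g by blast+
  show ?thesis
  proof (cases "K (j - 1) < cum (a - 1)")
    case False
    have "cum a < K j"
    proof (rule ccontr)
      assume "\<not> cum a < K j"
      then have "K (j - 1) = cum (a - 1) \<and> K j = cum a"
        using knot_interval_in_atom[OF j a] False by simp
      then show False using no_atom j by blast
    qed
    then show ?thesis using forced False by simp
  qed (use forced in simp)
qed

lemma knot_or_atom_interval:
  assumes a: "a \<in> {1..m}" and u: "cum (a - 1) \<le> u" "u \<le> cum a"
    and g: "\<And>j. j \<in> {1..n} \<Longrightarrow> 0 \<le> g j \<and> g j \<le> 1"
    and mass: "(\<Sum>j\<in>{1..n}. g j * p j) = u"
    and err: "(\<Sum>j\<in>{1..n}. g j * pe j) \<le> G u"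
  shows "(\<exists>j\<le>n. u = K j) \<or> (\<exists>j\<in>{1..n}. K (j - 1) = cum (a - 1) \<and> K j = cum a)"
proof (rule disjCI)
  assume no_atom: "\<not> (\<exists>j\<in>{1..n}. K (j - 1) = cum (a - 1) \<and> K j = cum a)"
  have forced: "K (j - 1) < cum (a - 1) \<and> g j = 1 \<or> \<not> K (j - 1) < cum (a - 1) \<and> cum a < K j \<and> g j = 0"
    if "j \<in> {1..n}" for j
    using interval_weight_forced[OF a u _ mass err no_atom that] g by blast
  have K_le: "K k \<le> K k' \<longleftrightarrow> k \<le> k'" if "k \<le> n" "k' \<le> n" for k k'
    using strict_mono_on_less_eq[OF knot_strict_mono] that by simp
  obtain j0 where j0: "j0 \<in> {1..n}" "K (j0 - 1) \<le> u" "u \<le> K j0"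
    using ex_bracketing_interval[OF n_pos, of K u] u cum_nonneg[of "a - 1"] cum_mono[of a m] a by auto
  define k where "k = (if K (j0 - 1) < cum (a - 1) then j0 else j0 - 1)"
  have "j0 - 1 \<le> n" "k \<le> n" using j0 by (auto simp: k_def)
  have g_prefix: "g j = (if j \<le> k then 1 else 0)" if j: "j \<in> {1..n}" for j
  proof -
    consider "j < j0" | "j = j0" | "j0 < j" by linarith
    then show ?thesis
    proof cases
      case 1
      then have "K j \<le> u" using K_le[OF _ \<open>j0 - 1 \<le> n\<close>, of j] j0 by auto
      then show ?thesis using forced[OF j] 1 u by (auto simp: k_def)
    next
      case 2
      then show ?thesis using forced[OF j] j0(1) by (auto simp: k_def)
    next
      case 3
      moreover have "j - 1 \<le> n" using j by auto
      ultimately have "u \<le> K (j - 1)" using K_le[of j0 "j - 1"] j0 by auto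
      then show ?thesis using forced[OF j] 3 u by (auto simp: k_def)
    qed
  qed
  have "u = (\<Sum>j\<in>{1..n}. if j \<le> k then p j else 0)"
    unfolding mass[symmetric] by (intro sum.cong refl) (simp add: g_prefix)
  also have "\<dots> = K k" using sum_if_le_prefix[OF \<open>k \<le> n\<close>, of p] sum_p_prefix[OF \<open>k \<le> n\<close>] by simp
  finally show "\<exists>j\<le>n. u = K j" using \<open>k \<le> n\<close> by blast
qed

end

section \<open>Comparing two degradations\<close>

lemma dq_split_if_Pstar:
  assumes "sorted_bsc_mix m q \<sigma>" "1 \<le> n" "is_Pstar_degr m q \<sigma> n i s"
  shows "dq_split m q \<sigma> n i s"
proof -
  have valid: "DQ_valid m q n i s"
    and pos: "\<And>j. j \<in> {1..n} \<Longrightarrow> 0 < DQ_p m q n i s j"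
    and eps_step: "\<And>j. j \<in> {1..<n} \<Longrightarrow> DQ_eps m q \<sigma> n i s j < DQ_eps m q \<sigma> n i s (j + 1)"
    and last: "DQ_eps m q \<sigma> n i s n \<le> 1/2"
    and split: "\<And>j. j \<in> {1..n} \<Longrightarrow> ix m n i (j + 1) = ix m n i j + 1 \<Longrightarrow>
        (sx n s j = 0 \<longrightarrow> sx n s (j + 1) = 0) \<and>
        (sx n s (j + 1) = qx m q (ix m n i (j + 1)) \<longrightarrow> sx n s j = qx m q (ix m n i j))"
    using assms(3) unfolding is_Pstar_degr_def by simp_all
  have half: "DQ_eps m q \<sigma> n i s j \<le> 1/2" if "j \<in> {1..n}" for j
  proof -
    have "j \<le> n" using that by simp
    then have "DQ_eps m q \<sigma> n i s j \<le> DQ_eps m q \<sigma> n i s n"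
    proof (induction rule: inc_induct)
      case (step k)
      then show ?case using eps_step[of k] that by simp
    qed simp
    then show ?thesis using last by simp
  qed
  show ?thesis
    by (intro dq_split.intro dq_split_axioms.intro assms(1,2) valid pos half split)
qed

lemma degraded_DQ_prefix_weights:
  assumes W: "dq_split m q \<sigma> n i s" and W': "dq_split m q \<sigma> n i' s'"
    and deg: "degraded (DQ m q \<sigma> n i s) (DQ m q \<sigma> n i' s')" and k: "k \<le> n"
  obtains g where "\<And>j. j \<in> {1..n} \<Longrightarrow> 0 \<le> g j \<and> g j \<le> 1"
    and "(\<Sum>j\<in>{1..n}. g j * DQ_p m q n i' s' j) = knot m q n i s k"
    and "(\<Sum>j\<in>{1..n}. g j * DQ_pe m q \<sigma> n i' s' j) \<le> err_integral m q \<sigma> (knot m q n i s k)"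
proof -
  interpret W: dq_split m q \<sigma> n i s by (fact W)
  interpret W': dq_split m q \<sigma> n i' s' by (fact W')
  let ?W = "DQ m q \<sigma> n i s" and ?W' = "DQ m q \<sigma> n i' s'"
  define f :: "nat \<Rightarrow> real" where "f y = (if y div 2 \<le> k then 1 else 0)" for y
  obtain f' where f': "\<And>y. y \<in> fst ?W' \<Longrightarrow> 0 \<le> f' y \<and> f' y \<le> 1"
    and total: "(\<Sum>y\<in>fst ?W'. f' y * (snd ?W' 0 y + snd ?W' 1 y)) = (\<Sum>y\<in>fst ?W. f y * (snd ?W 0 y + snd ?W 1 y))"
    and err: "(\<Sum>y\<in>fst ?W'. f' y * min (snd ?W' 0 y) (snd ?W' 1 y))
      \<le> (\<Sum>y\<in>fst ?W. f y * min (snd ?W 0 y) (snd ?W 1 y))"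
    by (rule degraded_test_transfer[OF deg W.finite_DQ_outputs W'.finite_DQ_outputs, of f]) (simp add: f_def, blast)
  define g where "g j = (f' (2 * j) + f' (2 * j + 1)) / 2" for j
  have "0 \<le> g j \<and> g j \<le> 1" if "j \<in> {1..n}" for j
  proof -
    have "2 * j \<in> fst ?W'" "2 * j + 1 \<in> fst ?W'"
      using that unfolding W'.DQ_eq_bsc_mix bsc_mix_outputs by auto
    then show ?thesis using f'[of "2 * j"] f'[of "2 * j + 1"] unfolding g_def by simp
  qed
  moreover have "(\<Sum>j\<in>{1..n}. g j * W'.p j) = W.K k"
  proof -
    have "2 * (\<Sum>j\<in>{1..n}. g j * W'.p j) = (\<Sum>y\<in>fst ?W'. f' y * (snd ?W' 0 y + snd ?W' 1 y))"
      unfolding W'.DQ_sum_total g_def sum_distrib_left by (intro sum.cong refl) (simp add: algebra_simps)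
    then show ?thesis using total W.DQ_prefix_test(1)[OF k] unfolding f_def by simp
  qed
  moreover have "(\<Sum>j\<in>{1..n}. g j * W'.pe j) \<le> W.G (W.K k)"
  proof -
    have "2 * (\<Sum>j\<in>{1..n}. g j * W'.pe j) = (\<Sum>y\<in>fst ?W'. f' y * min (snd ?W' 0 y) (snd ?W' 1 y))"
      unfolding W'.DQ_sum_min g_def sum_distrib_left by (intro sum.cong refl) (simp add: algebra_simps)
    then show ?thesis using err W.DQ_prefix_test(2)[OF k] unfolding f_def by simp
  qed
  ultimately show ?thesis by (rule that)
qed

lemma degraded_DQ_knot_cases:
  assumes W: "dq_split m q \<sigma> n i s" and W': "dq_split m q \<sigma> n i' s'"
    and deg: "degraded (DQ m q \<sigma> n i s) (DQ m q \<sigma> n i' s')" and k: "0 < k" "k < n"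
  shows "(\<exists>j\<le>n. knot m q n i s k = knot m q n i' s' j) \<or>
    (\<exists>j\<in>{1..n}. knot m q n i s (k - 1) < knot m q n i' s' (j - 1) \<and> knot m q n i' s' (j - 1) < knot m q n i s k
      \<and> knot m q n i s k < knot m q n i' s' j \<and> knot m q n i' s' j < knot m q n i s (k + 1))"
proof -
  interpret W: dq_split m q \<sigma> n i s by (fact W)
  interpret W': dq_split m q \<sigma> n i' s' by (fact W')
  define a where "a = ix m n i (k + 1)"
  have a: "a \<in> {1..m}" and atom: "W.cum (a - 1) \<le> W.K k" "W.K k \<le> W.cum a"
    using W.split_point_interior[of k] W.knot_in_atom[of k] k unfolding a_def by auto
  have "k \<le> n" "k \<in> {1..n}" "k + 1 \<in> {1..n}" using k by auto
  obtain g where g: "\<And>j. j \<in> {1..n} \<Longrightarrow> 0 \<le> g j \<and> g j \<le> 1"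
    and mass: "(\<Sum>j\<in>{1..n}. g j * W'.p j) = W.K k" and err: "(\<Sum>j\<in>{1..n}. g j * W'.pe j) \<le> W.G (W.K k)"
    using degraded_DQ_prefix_weights[OF W W' deg \<open>k \<le> n\<close>] by blast
  have "(\<exists>j\<le>n. W.K k = W'.K j) \<or> (\<exists>j\<in>{1..n}. W'.K (j - 1) = W.cum (a - 1) \<and> W'.K j = W.cum a)"
    using W'.knot_or_atom_interval[OF a atom _ mass err] g by blast
  then show ?thesis
  proof (elim disjE bexE conjE)
    fix j assume j: "j \<in> {1..n}" "W'.K (j - 1) = W.cum (a - 1)" "W'.K j = W.cum a"
    then have "j - 1 \<le> n" "j \<le> n" by auto
    show ?thesis
    proof (cases "W.K k = W.cum (a - 1) \<or> W.K k = W.cum a")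
      case True
      then have "\<exists>j'\<le>n. W.K k = W'.K j'"
      proof
        assume "W.K k = W.cum (a - 1)"
        then show ?thesis using j \<open>j - 1 \<le> n\<close> by (intro exI[of _ "j - 1"]) simp
      next
        assume "W.K k = W.cum a"
        then show ?thesis using j \<open>j \<le> n\<close> by (intro exI[of _ j]) simp
      qed
      then show ?thesis ..
    next
      case False
      then have inside: "W.cum (a - 1) < W.K k" "W.K k < W.cum a" using atom by auto
      have "W.K (k - 1) < W.cum (a - 1)"
      proof (rule ccontr)
        assume "\<not> W.K (k - 1) < W.cum (a - 1)"
        then have "W.K k = W.cum a" using W.knot_interval_in_atom[OF \<open>k \<in> {1..n}\<close> a] atom by simp
        then show False using inside by simp
      qed
      moreover have "W.cum a < W.K (k + 1)"
      proof (rule ccontr)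
        assume "\<not> W.cum a < W.K (k + 1)"
        then have "W.K k = W.cum (a - 1)" using W.knot_interval_in_atom[OF \<open>k + 1 \<in> {1..n}\<close> a] atom by simp
        then show False using inside by simp
      qed
      ultimately have "\<exists>j\<in>{1..n}. W.K (k - 1) < W'.K (j - 1) \<and> W'.K (j - 1) < W.K k
          \<and> W.K k < W'.K j \<and> W'.K j < W.K (k + 1)"
        using inside j by (intro bexI[of _ j]) auto
      then show ?thesis ..
    qed
  qed blast
qed

lemma degraded_DQ_knots_eq:
  assumes W: "dq_split m q \<sigma> n i s" and W': "dq_split m q \<sigma> n i' s'"
    and deg: "degraded (DQ m q \<sigma> n i s) (DQ m q \<sigma> n i' s')" and k: "k \<le> n"
  shows "knot m q n i s k = knot m q n i' s' k"
proof (rule knot_sequences_eq[OF _ _ _ _ _ k])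
  interpret W: dq_split m q \<sigma> n i s by (fact W)
  interpret W': dq_split m q \<sigma> n i' s' by (fact W')
  show "strict_mono_on {..n} W.K" "strict_mono_on {..n} W'.K"
    by (fact W.knot_strict_mono W'.knot_strict_mono)+
  show "W.K 0 = W'.K 0" "W.K n = W'.K n" by simp_all
qed (fact degraded_DQ_knot_cases[OF W W' deg])

theorem theorem4:
  fixes n m :: nat and q \<sigma> :: "nat \<Rightarrow> real"
    and i i' :: "nat \<Rightarrow> nat" and s s' :: "nat \<Rightarrow> real"
  assumes "2 \<le> n" and "n < m"
    and "in_Bstar m (bsc_mix {1..m} q \<sigma>)"
    and "\<forall>k\<in>{1..m}. q k > 0"
    and "0 \<le> \<sigma> 1" and "\<forall>k\<in>{1..<m}. \<sigma> k < \<sigma> (k+1)" and "\<sigma> m \<le> 1/2"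
    and "is_Pstar_degr m q \<sigma> n i s"
    and "is_Pstar_degr m q \<sigma> n i' s'"
    and "card {j\<in>{2..n}. (i j, s j) \<noteq> (i' j, s' j)} \<le> 2"
    and "degraded (DQ m q \<sigma> n i s) (DQ m q \<sigma> n i' s')"
  shows "chan_equiv (DQ m q \<sigma> n i s) (DQ m q \<sigma> n i' s')"
proof -
  have Q: "sorted_bsc_mix m q \<sigma>" using assms(4,6) by unfold_locales auto
  have W: "dq_split m q \<sigma> n i s" and W': "dq_split m q \<sigma> n i' s'"
    using dq_split_if_Pstar[OF Q] assms(1,8,9) by auto
  interpret W: dq_split m q \<sigma> n i s by (fact W)
  interpret W': dq_split m q \<sigma> n i' s' by (fact W')
  have "W.p j = W'.p j \<and> DQ_eps m q \<sigma> n i s j = DQ_eps m q \<sigma> n i' s' j" if "j \<in> {1..n}" for j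
  proof -
    have "W.K j = W'.K j" "W.K (j - 1) = W'.K (j - 1)"
      using degraded_DQ_knots_eq[OF W W' assms(11)] that by auto
    then show ?thesis
      using that W.p_eq_knot_diff W'.p_eq_knot_diff W.pe_eq_err_diff W'.pe_eq_err_diff
      by (simp add: DQ_eps_def)
  qed
  then show ?thesis unfolding W.DQ_eq_bsc_mix W'.DQ_eq_bsc_mix by (rule bsc_mix_equiv)
qed

end
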